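(* Let $H$ be a (simple) graph containing no cycle of length 5, and let $C$ be a shortest odd cycle of length at least $7$ in $H$ (i.e. an odd cycle of minimum length among odd cycles of length $\geq 7$). Then $C$ contains an edge $v_1v_2$ and a vertex $w$ opposite to it on $C$ such that $C$ is the union of the edge $v_1v_2$, a shortest $v_1$–$w$ path in $H$, and a shortest $v_2$–$w$ path in $H$.
   Context: Cycles are subgraphs, not necessarily induced. The length of a path or cycle is its number of edges. For a cycle of length $2k+1$, the vertex $w$ opposite the edge $v_1v_2$ is the vertex at distance $k$ along the cycle from both $v_1$ and $v_2$. *)

theory Defs
  imports Main
begin

definition simple_graph :: "'a set \<Rightarrow> ('a \<Rightarrow> 'a \<Rightarrow> bool) \<Rightarrow> bool" where
  "simple_graph V E \<longleftrightarrow> (\<forall>x y. E x y \<longrightarrow> x \<in> V \<and> y \<in> V) \<and>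
     (\<forall>x y. E x y \<longrightarrow> E y x) \<and> (\<forall>x. \<not> E x x)"

text \<open>A path, given by its (distinct) vertex sequence; its length is (length P - 1) edges.\<close>
definition is_path :: "('a \<Rightarrow> 'a \<Rightarrow> bool) \<Rightarrow> 'a list \<Rightarrow> bool" where
  "is_path E P \<longleftrightarrow> P \<noteq> [] \<and> distinct P \<and> (\<forall>i. Suc i < length P \<longrightarrow> E (P ! i) (P ! Suc i))"

text \<open>A cycle, given by its cyclic sequence of distinct vertices; its length is length C.\<close>
definition is_cycle :: "('a \<Rightarrow> 'a \<Rightarrow> bool) \<Rightarrow> 'a list \<Rightarrow> bool" where
  "is_cycle E C \<longleftrightarrow> 3 \<le> length C \<and> distinct C \<and>
     (\<forall>i < length C. E (C ! i) (C ! ((i + 1) mod length C)))"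

definition path_edges :: "'a list \<Rightarrow> 'a set set" where
  "path_edges P = {{P ! i, P ! Suc i} | i. Suc i < length P}"

definition cycle_edges :: "'a list \<Rightarrow> 'a set set" where
  "cycle_edges C = {{C ! i, C ! ((i + 1) mod length C)} | i. i < length C}"

definition shortest_path :: "('a \<Rightarrow> 'a \<Rightarrow> bool) \<Rightarrow> 'a list \<Rightarrow> 'a \<Rightarrow> 'a \<Rightarrow> bool" where
  "shortest_path E P u v \<longleftrightarrow> is_path E P \<and> hd P = u \<and> last P = v \<and>
     (\<forall>Q. is_path E Q \<and> hd Q = u \<and> last Q = v \<longrightarrow> length P \<le> length Q)"

end

theory Submission
  imports Defs
begin

text \<open>
  Every odd cycle shorter than \<open>C\<close> is a triangle. Call an edge between the vertices at
  positions \<open>a\<close> and \<open>a + 2\<close> of \<open>C\<close> a short chord. Two short chords at positions more than one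
  apart would shortcut \<open>C\<close> to an odd cycle of length at least 5, so all short chords
  straddle a single edge \<open>v\<^sub>1v\<^sub>2\<close> of \<open>C\<close>. A path between two vertices of \<open>C\<close> that
  is internally disjoint from \<open>C\<close> closes up with the two arcs of \<open>C\<close> to two cycles of
  different parity; minimality of \<open>C\<close> forces the path to be at least as long as the shorter
  arc, unless it is a short chord. Hence the distance along \<open>C\<close> to the vertex \<open>w\<close> opposite
  \<open>v\<^sub>1v\<^sub>2\<close> changes along any path by at most the length of the path, and the two halves
  of \<open>C\<close> from \<open>v\<^sub>1\<close> and \<open>v\<^sub>2\<close> to \<open>w\<close> are shortest paths.
\<close>

lemma is_path_iff_successively:
  "is_path E P \<longleftrightarrow> P \<noteq> [] \<and> distinct P \<and> successively E P"
  by (simp add: is_path_def successively_conv_nth)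

lemma is_cycle_iff_successively:
  "is_cycle E D \<longleftrightarrow> 3 \<le> length D \<and> distinct D \<and> successively E (D @ [hd D])"
proof (cases "D = []")
  case False
  have "(i + 1) mod length D = (if Suc i = length D then 0 else Suc i)" if "i < length D" for i
    using that by auto
  then have "(\<forall>i < length D. E (D ! i) (D ! ((i + 1) mod length D))) \<longleftrightarrow>
             (\<forall>i. Suc i < length (D @ [hd D]) \<longrightarrow> E ((D @ [hd D]) ! i) ((D @ [hd D]) ! Suc i))"
    using False by (auto simp: nth_append hd_conv_nth less_Suc_eq)
  then show ?thesis
    unfolding is_cycle_def successively_conv_nth by simp
next
  case True then show ?thesis by (simp add: is_cycle_def)
qed

lemma is_path_rev:
  assumes "\<And>x y. E x y \<Longrightarrow> E y x" and "is_path E P"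
  shows "is_path E (rev P)"
proof -
  have "successively (\<lambda>x y. E y x) P"
    using assms by (auto simp: is_path_iff_successively intro: successively_mono)
  then show ?thesis
    using assms(2) by (simp add: is_path_iff_successively)
qed

lemma is_path_split:
  assumes "is_path E Q" "p < length Q"
  shows "is_path E (take (Suc p) Q)" "hd (take (Suc p) Q) = hd Q" "last (take (Suc p) Q) = Q ! p"
    and "is_path E (drop p Q)" "hd (drop p Q) = Q ! p" "last (drop p Q) = last Q"
proof -
  show "is_path E (take (Suc p) Q)" "is_path E (drop p Q)"
    using assms by (auto simp: is_path_def)
  show "hd (take (Suc p) Q) = hd Q" "last (take (Suc p) Q) = Q ! p"
    using assms(2) by (cases Q, simp_all add: take_Suc_conv_app_nth)
  show "hd (drop p Q) = Q ! p" "last (drop p Q) = last Q"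
    using assms(2) by (simp_all add: hd_drop_conv_nth)
qed

lemma is_path_Cons_snoc:
  assumes "is_path E B" "E x (hd B)" "E (last B) y" "x \<notin> set B" "y \<notin> set B" "x \<noteq> y"
  shows "is_path E (x # B @ [y])"
proof -
  have "B \<noteq> []" "successively E B"
    using assms(1) by (simp_all add: is_path_iff_successively)
  then have "successively E (B @ [y])"
    using assms(3) by (simp add: successively_append_iff)
  then have "successively E (x # B @ [y])"
    using assms(2) \<open>B \<noteq> []\<close> by (simp add: successively_Cons)
  then show ?thesis
    using assms by (simp add: is_path_iff_successively)
qed

lemma is_path_length_ge_2: "is_path E P \<Longrightarrow> hd P \<noteq> last P \<Longrightarrow> 2 \<le> length P"
  by (cases P; cases "tl P") (auto simp: is_path_def)

lemma is_path_length_2: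
  assumes "is_path E Q" "length Q = 2"
  shows "E (hd Q) (last Q)"
proof -
  obtain x y where "Q = [x, y]"
    using assms(2) by (auto simp: numeral_2_eq_2 length_Suc_conv)
  then show ?thesis
    using assms(1) by (simp add: is_path_iff_successively)
qed

lemma distinct_butlast_append:
  assumes "distinct P" "distinct A" "P \<noteq> []" "A \<noteq> []" and "set P \<inter> set A \<subseteq> {last P, last A}"
  shows "distinct (butlast P @ butlast A)"
proof -
  have "last P \<notin> set (butlast P)" "last A \<notin> set (butlast A)"
    using assms(1-4) by (metis append_butlast_last_id distinct_append disjoint_iff list.set_intros(1))+
  moreover have "set (butlast P) \<inter> set (butlast A) \<subseteq> {last P, last A}"
    using assms(5) by (auto dest: in_set_butlastD)
  ultimately show ?thesis
    using assms(1,2) by (auto simp: distinct_butlast)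
qed

lemma is_cycle_glue:
  assumes P: "is_path E P" "hd P = x" "last P = y"
    and A: "is_path E A" "hd A = y" "last A = x"
    and "x \<noteq> y" and meet: "set P \<inter> set A \<subseteq> {x, y}" and "5 \<le> length P + length A"
  shows "is_cycle E (butlast P @ butlast A)"
proof -
  have lP: "2 \<le> length P" and lA: "2 \<le> length A"
    using is_path_length_ge_2 P A \<open>x \<noteq> y\<close> by metis+
  then have "P \<noteq> []" "A \<noteq> []"
    by auto
  then have P_split: "butlast P @ [y] = P" and A_split: "y # tl A = A" "butlast A @ [x] = A"
    using P A by (metis append_butlast_last_id hd_Cons_tl)+
  have distinct: "distinct (butlast P @ butlast A)"
    using P A meet \<open>P \<noteq> []\<close> \<open>A \<noteq> []\<close>
    by (intro distinct_butlast_append) (auto simp: is_path_def)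
  have "hd (butlast P @ butlast A) = x"
    using P lP by (cases P; cases "tl P") auto
  then have "(butlast P @ butlast A) @ [hd (butlast P @ butlast A)] = P @ tl A"
    by (metis P_split A_split append_assoc append_Cons append_Nil)
  moreover have "successively E (P @ tl A)"
  proof -
    have "successively E (y # tl A)"
      using A(1) A_split(1) by (simp add: is_path_iff_successively)
    then have "tl A = [] \<or> E y (hd (tl A)) \<and> successively E (tl A)"
      by (simp only: successively_Cons)
    moreover have "successively E P"
      using P(1) by (simp add: is_path_iff_successively)
    ultimately show ?thesis
      using P(3) by (auto simp: successively_append_iff)
  qed
  ultimately show ?thesis
    using distinct lP lA \<open>5 \<le> length P + length A\<close>
    by (simp add: is_cycle_iff_successively)
qed

lemma path_edges_rev: "path_edges (rev P) = path_edges P"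
proof -
  have "path_edges P \<subseteq> path_edges (rev P)" for P :: "'a list"
  proof
    fix e assume "e \<in> path_edges P"
    then obtain i where i: "Suc i < length P" "e = {P ! i, P ! Suc i}"
      by (auto simp: path_edges_def)
    define j where "j = length P - Suc (Suc i)"
    have "rev P ! j = P ! Suc i" "rev P ! Suc j = P ! i" "Suc j < length (rev P)"
      using i by (simp_all add: j_def rev_nth Suc_diff_Suc)
    then show "e \<in> path_edges (rev P)"
      using i by (auto simp: path_edges_def insert_commute intro!: exI[of _ j])
  qed
  from this[of P] this[of "rev P"] show ?thesis by simp
qed

lemma exists_offset_mod:
  fixes n r j :: nat
  assumes "j < n" shows "\<exists>t<n. (r + t) mod n = j"
proof -
  define t where "t = (j + n - r mod n) mod n"
  have "r mod n + (j + n - r mod n) = j + n"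
    using assms by (simp add: less_imp_le_nat trans_less_add2)
  then have "(r + t) mod n = j"
    using assms unfolding t_def by (metis mod_add_eq mod_add_self2 mod_less mod_mod_trivial)
  moreover have "t < n" using assms t_def by simp
  ultimately show ?thesis by blast
qed

lemma center_distance_diff_le:
  fixes s t m k :: nat
  assumes "s < t" "t < 2 * k + 1"
    and "t - s \<le> m \<or> 2 * k + 1 - (t - s) \<le> m \<or> m = 1 \<and> 2 * k + 1 - (t - s) = 2"
  shows "\<bar>\<bar>int s - int k\<bar> - \<bar>int t - int k\<bar>\<bar> \<le> int m"
  using assms by (auto simp: abs_if)

text \<open>
  The hypotheses of the theorem (no 5-cycle, \<open>C\<close> shortest among odd cycles of length
  \<open>\<ge> 7\<close>) say exactly that every odd cycle shorter than \<open>C\<close> is a triangle.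
\<close>

locale minimal_odd_cycle_except_triangles =
  fixes E :: "'a \<Rightarrow> 'a \<Rightarrow> bool" and C :: "'a list"
  assumes sym: "E x y \<Longrightarrow> E y x"
    and cycle: "is_cycle E C"
    and odd_length: "odd (length C)"
    and length_ge_7: "7 \<le> length C"
    and shorter_odd_cycle: "is_cycle E D \<Longrightarrow> odd (length D) \<Longrightarrow> length D < length C \<Longrightarrow> length D = 3"
begin

abbreviation n where "n \<equiv> length C"

definition cv :: "nat \<Rightarrow> 'a" where
  "cv u = C ! (u mod n)"

definition arc :: "nat \<Rightarrow> nat \<Rightarrow> 'a list" where
  "arc b d = map (\<lambda>t. cv (b + t)) [0..<Suc d]"

lemma n_pos: "0 < n"
  using length_ge_7 by linarith

lemma cv_eq_iff: "cv u = cv v \<longleftrightarrow> u mod n = v mod n"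
  using cycle n_pos by (simp add: cv_def is_cycle_def nth_eq_iff_index_eq)

lemma cv_in_set: "cv u \<in> set C"
  using n_pos by (simp add: cv_def)

lemma cv_adj: "E (cv u) (cv (Suc u))"
proof -
  have "E (C ! (u mod n)) (C ! ((u mod n + 1) mod n))"
    using cycle n_pos by (simp add: is_cycle_def)
  then show ?thesis
    by (simp add: cv_def mod_Suc_eq)
qed

lemma cv_add_n: "cv (u + n) = cv u"
  by (simp add: cv_def)

lemma cv_offset_eq_iff:
  assumes "s \<le> t" "t \<le> n"
  shows "cv (a + s) = cv (a + t) \<longleftrightarrow> s = t \<or> s = 0 \<and> t = n"
proof -
  have "cv (a + s) = cv (a + t) \<longleftrightarrow> n dvd (a + t) - (a + s)"
    unfolding cv_eq_iff eq_commute[of "(a + s) mod n"] using assms by (intro mod_eq_dvd_iff_nat) simp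
  also have "\<dots> \<longleftrightarrow> n dvd t - s"
    by simp
  also have "\<dots> \<longleftrightarrow> t - s = 0 \<or> t - s = n"
    using assms by (auto dest: dvd_imp_le elim: dvdE)
  finally show ?thesis
    using assms by auto
qed

lemma cv_offset_inj:
  assumes "s < n" "t < n" "cv (a + s) = cv (a + t)"
  shows "s = t"
proof -
  have "s \<le> t \<Longrightarrow> s = t \<or> s = 0 \<and> t = n" "t \<le> s \<Longrightarrow> t = s \<or> t = 0 \<and> s = n"
    using assms cv_offset_eq_iff[of s t a] cv_offset_eq_iff[of t s a] by simp_all
  then show ?thesis
    using assms(1,2) by linarith
qed

lemma cv_offset_neq: "s < t \<Longrightarrow> t \<le> n \<Longrightarrow> 0 < s \<or> t < n \<Longrightarrow> cv (a + s) \<noteq> cv (a + t)"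
  using cv_offset_eq_iff[of s t a] by auto

lemma length_arc [simp]: "length (arc b d) = Suc d"
  by (simp add: arc_def)

lemma nth_arc: "t \<le> d \<Longrightarrow> arc b d ! t = cv (b + t)"
  by (simp add: arc_def del: upt_Suc)

lemma hd_arc: "hd (arc b d) = cv b"
  by (simp add: arc_def hd_map del: upt_Suc)

lemma last_arc: "last (arc b d) = cv (b + d)"
  by (simp add: arc_def last_map del: upt_Suc)

lemma set_arc: "set (arc b d) = {cv (b + t) | t. t \<le> d}"
  by (auto simp: arc_def less_Suc_eq_le simp del: upt_Suc)

lemma set_arc_shift: "set (arc (a + s) d) = {cv (a + t) | t. s \<le> t \<and> t \<le> s + d}"
proof (intro set_eqI iffI)
  fix x assume "x \<in> set (arc (a + s) d)"
  then obtain t where "t \<le> d" "x = cv (a + s + t)"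
    by (auto simp: set_arc)
  then show "x \<in> {cv (a + t) | t. s \<le> t \<and> t \<le> s + d}"
    by (intro CollectI exI[of _ "s + t"]) (simp add: add.assoc)
next
  fix x assume "x \<in> {cv (a + t) | t. s \<le> t \<and> t \<le> s + d}"
  then obtain t where "s \<le> t" "t \<le> s + d" "x = cv (a + t)"
    by blast
  then show "x \<in> set (arc (a + s) d)"
    unfolding set_arc by (intro CollectI exI[of _ "t - s"]) simp
qed

lemma set_arc_subset: "set (arc b d) \<subseteq> set C"
  using cv_in_set by (auto simp: set_arc)

lemma set_arcs_disjoint:
  assumes "s + d < s'" "s' + d' \<le> n" "0 < s \<or> s' + d' < n"
  shows "set (arc (a + s) d) \<inter> set (arc (a + s') d') = {}"
proof -
  have "cv (a + t) \<noteq> cv (a + t')" if "t \<le> s + d" "s' \<le> t'" "t' \<le> s' + d'" "s \<le> t" for t t'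
    by (rule cv_offset_neq) (use that assms in auto)
  then show ?thesis
    unfolding set_arc_shift by blast
qed

lemma last_arc_around:
  assumes "d \<le> n" shows "last (arc (a + d) (n - d)) = cv a"
proof -
  have "a + d + (n - d) = a + n"
    using assms by simp
  then show ?thesis
    by (simp only: last_arc cv_add_n)
qed

lemma is_path_arc: "d < n \<Longrightarrow> is_path E (arc b d)"
  unfolding is_path_def
proof (intro conjI allI impI)
  assume "d < n"
  have "inj_on (\<lambda>t. cv (b + t)) {0..<Suc d}"
  proof (rule inj_onI)
    fix x y assume "x \<in> {0..<Suc d}" "y \<in> {0..<Suc d}" "cv (b + x) = cv (b + y)"
    moreover from this have "x < n" "y < n"
      using \<open>d < n\<close> by auto
    ultimately show "x = y"
      using cv_offset_inj by blast
  qed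
  then show "distinct (arc b d)"
    by (simp add: arc_def distinct_map del: upt_Suc)
next
  fix i assume "Suc i < length (arc b d)"
  then show "E (arc b d ! i) (arc b d ! Suc i)"
    using cv_adj by (simp add: nth_arc)
qed (simp add: arc_def)

lemma path_edges_arc: "path_edges (arc b d) = {{cv (b + t), cv (b + t + 1)} | t. t < d}"
  unfolding path_edges_def by (force simp: nth_arc)

lemma set_C_eq: "set C = {cv (r + t) | t. t < n}"
proof
  show "set C \<subseteq> {cv (r + t) | t. t < n}"
  proof
    fix x assume "x \<in> set C"
    then obtain j where "j < n" "x = C ! j"
      by (auto simp: in_set_conv_nth)
    moreover obtain t where "t < n" "(r + t) mod n = j"
      using exists_offset_mod[OF \<open>j < n\<close>] by blast
    ultimately show "x \<in> {cv (r + t) | t. t < n}"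
      by (auto simp: cv_def)
  qed
qed (use cv_in_set in auto)

lemma cycle_edges_C_eq: "cycle_edges C = {{cv (r + t), cv (r + t + 1)} | t. t < n}"
proof
  show "cycle_edges C \<subseteq> {{cv (r + t), cv (r + t + 1)} | t. t < n}"
  proof
    fix e assume "e \<in> cycle_edges C"
    then obtain j where j: "j < n" "e = {C ! j, C ! ((j + 1) mod n)}"
      by (auto simp: cycle_edges_def)
    obtain t where t: "t < n" "(r + t) mod n = j"
      using exists_offset_mod[OF j(1)] by blast
    then have "(r + t + 1) mod n = (j + 1) mod n"
      by (metis mod_Suc_eq add.commute plus_1_eq_Suc)
    then show "e \<in> {{cv (r + t), cv (r + t + 1)} | t. t < n}"
      using j t by (auto simp: cv_def)
  qed
  show "{{cv (r + t), cv (r + t + 1)} | t. t < n} \<subseteq> cycle_edges C"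
  proof
    fix e assume "e \<in> {{cv (r + t), cv (r + t + 1)} | t. t < n}"
    then obtain t where t: "e = {cv (r + t), cv (r + t + 1)}"
      by auto
    have "(r + t + 1) mod n = ((r + t) mod n + 1) mod n"
      by (simp add: mod_Suc_eq)
    then have "e = {C ! ((r + t) mod n), C ! (((r + t) mod n + 1) mod n)}"
      using t by (simp add: cv_def)
    then show "e \<in> cycle_edges C"
      using n_pos by (auto simp: cycle_edges_def)
  qed
qed

definition short_chord :: "nat \<Rightarrow> bool" where
  "short_chord a \<longleftrightarrow> E (cv a) (cv (a + 2))"

lemma short_chord_add_n: "short_chord (a + n) = short_chord a"
proof -
  have "a + n + 2 = (a + 2) + n"
    by simp
  then show ?thesis
    unfolding short_chord_def by (metis cv_add_n)
qed

text \<open>Shortcutting \<open>C\<close> along both chords leaves a cycle of odd length \<open>n - 2 \<ge> 5\<close>.\<close>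

lemma short_chords_far_absurd:
  assumes chords: "short_chord a" "short_chord (a + q)" and q: "2 \<le> q" "q + 3 \<le> n"
  shows False
proof -
  define y where "y = cv (a + (q + 2))"
  define B where "B = arc (a + 2) (q - 2)"
  define P where "P = cv a # B @ [y]"
  define A where "A = arc (a + (q + 2)) (n - (q + 2))"
  have "set (arc (a + 0) 0) \<inter> set B = {}" "set B \<inter> set (arc (a + (q + 2)) 0) = {}"
    "set B \<inter> set A = {}" "set (arc (a + 0) 0) \<inter> set (arc (a + (q + 2)) 0) = {}"
    unfolding A_def B_def using q by (intro set_arcs_disjoint; simp)+
  then have disjoint: "cv a \<notin> set B" "y \<notin> set B" "set B \<inter> set A = {}" "cv a \<noteq> y"
    by (auto simp: arc_def y_def)
  have "last B = cv (a + q)"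
    unfolding B_def last_arc using q by (simp only: add.assoc le_add_diff_inverse)
  then have "E (cv a) (hd B)" "E (last B) y"
    using chords by (simp_all add: short_chord_def B_def y_def hd_arc)
  moreover have "is_path E B"
    using q by (simp add: B_def is_path_arc)
  ultimately have "is_path E P"
    unfolding P_def using disjoint by (intro is_path_Cons_snoc)
  moreover have "is_path E A" "hd A = y"
    using q by (simp_all add: A_def y_def is_path_arc hd_arc)
  moreover have "last A = cv a"
    unfolding A_def using q by (intro last_arc_around) simp
  moreover have "set P \<inter> set A \<subseteq> {cv a, y}" "5 \<le> length P + length A"
    using disjoint q by (auto simp: P_def A_def B_def)
  ultimately have "is_cycle E (butlast P @ butlast A)"
    using disjoint by (intro is_cycle_glue[of E P "cv a" y]) (simp_all add: P_def)
  moreover have "length (butlast P @ butlast A) = n - 2"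
    using q by (simp add: P_def A_def B_def)
  moreover have "odd (n - 2)" "n - 2 < n"
    using odd_length length_ge_7 by presburger+
  ultimately have "n - 2 = 3"
    using shorter_odd_cycle by metis
  then show False
    using length_ge_7 by simp
qed

lemma short_chords_adjacent:
  assumes chords: "short_chord a" "short_chord (a + q)" and "q + 2 \<le> n"
  shows "q \<le> 1"
proof (rule ccontr)
  assume "\<not> q \<le> 1"
  then have "2 \<le> q"
    by simp
  show False
  proof (cases "q + 3 \<le> n")
    case True
    then show False
      using short_chords_far_absurd chords \<open>2 \<le> q\<close> by blast
  next
    case False
    then have "a + n = a + q + 2"
      using \<open>q + 2 \<le> n\<close> by simp
    then have "short_chord (a + q + 2)"
      using chords(1) short_chord_add_n[of a] by simp
    then show False
      using short_chords_far_absurd[OF chords(2), of 2] length_ge_7 by (simp add: add.assoc)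
  qed
qed

lemma no_short_chord_after_pair:
  assumes a: "short_chord a" "short_chord (a + (n - 1))" and "q + 2 < n"
  shows "\<not> short_chord (a + 1 + q)"
proof
  assume c: "short_chord (a + 1 + q)"
  show False
  proof (cases q)
    case 0
    have "a + (n - 1) = a + 1 + (n - 2)"
      using length_ge_7 by simp
    then have "short_chord (a + 1 + (n - 2))"
      using a(2) by metis
    moreover have "short_chord (a + 1)"
      using c 0 by simp
    ultimately have "n - 2 \<le> 1"
      using short_chords_adjacent[of "a + 1" "n - 2"] length_ge_7 by linarith
    then show False
      using length_ge_7 by simp
  next
    case (Suc p)
    then show False
      using short_chords_adjacent[OF a(1), of "q + 1"] c \<open>q + 2 < n\<close> by simp
  qed
qed

lemma no_short_chord_after_single:
  assumes a: "short_chord a" "\<not> short_chord (a + (n - 1))" and "q + 2 < n"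
  shows "\<not> short_chord (a + 2 + q)"
proof
  assume c: "short_chord (a + 2 + q)"
  show False
  proof (cases "q + 3 = n")
    case True
    then have "a + 2 + q = a + (n - 1)"
      by simp
    then show False
      using c a(2) by metis
  next
    case False
    then show False
      using short_chords_adjacent[OF a(1), of "q + 2"] c \<open>q + 2 < n\<close> by simp
  qed
qed

lemma exists_short_chord_free_base: "\<exists>r. \<forall>q. q + 2 < n \<longrightarrow> \<not> short_chord (r + q)"
proof (cases "\<exists>a. short_chord a")
  case True
  then obtain a where a: "short_chord a"
    by blast
  show ?thesis
  proof (cases "short_chord (a + (n - 1))")
    case True
    then show ?thesis
      using no_short_chord_after_pair[OF a True] by blast
  next
    case False
    then show ?thesis
      using no_short_chord_after_single[OF a False] by blast
  qed
qed blast

lemma bridge_arc_triangle: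
  assumes Q: "is_path E Q" "hd Q = x" "last Q = y" "set Q \<inter> set C \<subseteq> {x, y}" "x \<noteq> y"
    and A: "is_path E A" "hd A = y" "last A = x" "set A \<subseteq> set C"
    and len: "length Q < length A" "length Q + length A < n + 2" "odd (length Q + length A)"
  shows "length Q = 2 \<and> length A = 3"
proof -
  have "2 \<le> length Q"
    using is_path_length_ge_2 Q by metis
  moreover have "set Q \<inter> set A \<subseteq> {x, y}"
    using Q(4) A(4) by blast
  ultimately have "is_cycle E (butlast Q @ butlast A)"
    using Q A len(1) by (intro is_cycle_glue) auto
  moreover have "odd (length (butlast Q @ butlast A))" "length (butlast Q @ butlast A) < n"
    using len \<open>2 \<le> length Q\<close> by auto
  ultimately have "length (butlast Q @ butlast A) = 3"
    using shorter_odd_cycle by blast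
  then show ?thesis
    using len(1) \<open>2 \<le> length Q\<close> by simp arith
qed

text \<open>
  \<open>Q\<close> closes up with the two arcs of \<open>C\<close> between its ends to cycles of lengths
  \<open>m + d\<close> and \<open>m + (n - d)\<close>, one of which is odd.
\<close>

lemma bridge_length:
  assumes Q: "is_path E Q" "hd Q = cv a" "last Q = cv (a + d)" and d: "0 < d" "d < n"
    and off: "set Q \<inter> set C \<subseteq> {cv a, cv (a + d)}"
  shows "d \<le> length Q - 1 \<or> n - d \<le> length Q - 1 \<or> length Q = 2 \<and> (d = 2 \<or> n - d = 2)"
proof (rule ccontr)
  assume short: "\<not> ?thesis"
  have ne: "cv a \<noteq> cv (a + d)"
    using cv_offset_neq[of 0 d a] d by simp
  then have "2 \<le> length Q"
    using is_path_length_ge_2 Q by metis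
  define m where "m = length Q - 1"
  have len_Q: "length Q = m + 1"
    using \<open>2 \<le> length Q\<close> by (simp add: m_def)
  have m: "m < d" "m < n - d" "\<not> (m = 1 \<and> (d = 2 \<or> n - d = 2))"
    using short len_Q by simp_all
  have md: "m + d < n" "m + (n - d) < n"
    using m(1,2) by linarith+
  have triangle: "m = 1 \<and> e = 2"
    if "is_path E A" "hd A = cv (a + d)" "last A = cv a" "set A \<subseteq> set C"
      and "length A = e + 1" "m < e" "m + e < n" "odd (m + e)" for A e
    using bridge_arc_triangle[OF Q off ne that(1-4)] that(5-8) len_Q by simp
  have "odd (m + d) \<or> odd (m + (n - d))"
    using odd_length d by presburger
  moreover have "\<not> odd (m + d)"
  proof -
    have "is_path E (rev (arc a d))"
      using is_path_rev[OF sym is_path_arc[OF d(2)]] .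
    moreover have "hd (rev (arc a d)) = cv (a + d)" "last (rev (arc a d)) = cv a"
      "set (rev (arc a d)) \<subseteq> set C" "length (rev (arc a d)) = d + 1"
      using set_arc_subset by (simp_all add: hd_rev last_rev hd_arc last_arc)
    ultimately show ?thesis
      using triangle[of "rev (arc a d)" d] m(1,3) md(1) by blast
  qed
  moreover have "\<not> odd (m + (n - d))"
  proof -
    have "is_path E (arc (a + d) (n - d))" "last (arc (a + d) (n - d)) = cv a"
      using d by (simp_all add: is_path_arc last_arc_around)
    moreover have "hd (arc (a + d) (n - d)) = cv (a + d)"
      "set (arc (a + d) (n - d)) \<subseteq> set C" "length (arc (a + d) (n - d)) = n - d + 1"
      using set_arc_subset by (simp_all add: hd_arc)
    ultimately show ?thesis
      using triangle[of "arc (a + d) (n - d)" "n - d"] m(2,3) md(2) by blast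
  qed
  ultimately show False
    by blast
qed

abbreviation k where "k \<equiv> n div 2"

lemma two_k_Suc_eq_n: "2 * k + 1 = n"
  using odd_length by simp

lemma k_less_n: "k < n" and two_k_less_n: "2 * k < n"
  using two_k_Suc_eq_n by linarith+

lemma nth_C_eq_cv: "C ! ((u mod n + j) mod n) = cv (u + j)"
  by (simp add: cv_def mod_add_left_eq)

lemma set_C_two_arcs: "set C = set (rev (arc (r + k) k)) \<union> set (arc r k)"
proof
  show "set (rev (arc (r + k) k)) \<union> set (arc r k) \<subseteq> set C"
    using set_arc_subset by auto
  show "set C \<subseteq> set (rev (arc (r + k) k)) \<union> set (arc r k)"
  proof
    fix x assume "x \<in> set C"
    then obtain t where t: "t < n" "x = cv (r + t)"
      using set_C_eq[of r] by blast
    show "x \<in> set (rev (arc (r + k) k)) \<union> set (arc r k)"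
    proof (cases "t \<le> k")
      case True
      then show ?thesis
        using t by (auto simp: set_arc)
    next
      case False
      then have "k \<le> t" "t \<le> k + k"
        using t two_k_Suc_eq_n by simp_all
      then show ?thesis
        using t by (auto simp: set_arc_shift)
    qed
  qed
qed

lemma cycle_edges_two_arcs:
  "cycle_edges C = {{cv (r + 2 * k), cv r}} \<union> path_edges (rev (arc (r + k) k)) \<union> path_edges (arc r k)"
proof -
  have "r + 2 * k + 1 = r + n"
    using two_k_Suc_eq_n by linarith
  then have wrap: "cv (r + 2 * k + 1) = cv r"
    by (simp only: cv_add_n)
  have "{{cv (r + t), cv (r + t + 1)} | t. t < n} =
        {{cv (r + 2 * k), cv r}} \<union> {{cv (r + k + t), cv (r + k + t + 1)} | t. t < k}
          \<union> {{cv (r + t), cv (r + t + 1)} | t. t < k}"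
  proof (intro set_eqI iffI)
    fix e assume "e \<in> {{cv (r + t), cv (r + t + 1)} | t. t < n}"
    then obtain t where t: "t < n" "e = {cv (r + t), cv (r + t + 1)}"
      by blast
    consider "t < k" | "k \<le> t \<and> t < 2 * k" | "t = 2 * k"
      using t two_k_Suc_eq_n by linarith
    then show "e \<in> {{cv (r + 2 * k), cv r}} \<union> {{cv (r + k + t), cv (r + k + t + 1)} | t. t < k}
                  \<union> {{cv (r + t), cv (r + t + 1)} | t. t < k}"
    proof cases
      case 2
      then have "r + k + (t - k) = r + t" "t - k < k"
        by auto
      then show ?thesis
        using t by (auto intro!: exI[of _ "t - k"])
    qed (use t wrap in auto)
  next
    fix e assume "e \<in> {{cv (r + 2 * k), cv r}} \<union> {{cv (r + k + t), cv (r + k + t + 1)} | t. t < k}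
                  \<union> {{cv (r + t), cv (r + t + 1)} | t. t < k}"
    then show "e \<in> {{cv (r + t), cv (r + t + 1)} | t. t < n}"
      using wrap two_k_Suc_eq_n by (force intro: exI[of _ "2 * k"] exI[of _ "k + _"] simp: add.assoc)
  qed
  then show ?thesis
    by (simp add: cycle_edges_C_eq[of r] path_edges_rev path_edges_arc)
qed

end

text \<open>
  All short chords lie at positions \<open>r - 2\<close> and \<open>r - 1\<close>, around the edge from
  \<open>cv (r - 1)\<close> to \<open>cv r\<close>; this is the edge \<open>v\<^sub>1v\<^sub>2\<close>, and \<open>cv (r + k)\<close> is the vertex
  opposite to it. The potential of \<open>s\<close> is the distance of \<open>cv (r + s)\<close> from \<open>cv (r + k)\<close>
  along \<open>C\<close>.
\<close>

locale short_chord_free_base = minimal_odd_cycle_except_triangles +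
  fixes r :: nat
  assumes no_short_chord: "q + 2 < n \<Longrightarrow> \<not> short_chord (r + q)"
begin

definition potential :: "nat \<Rightarrow> int" where
  "potential s = \<bar>int s - int k\<bar>"

lemma potential_0: "potential 0 = int k" and potential_k: "potential k = 0"
  and potential_2k: "potential (2 * k) = int k"
  unfolding potential_def by linarith+

lemma potential_bridge_ordered:
  assumes Q: "is_path E Q" "hd Q = cv (r + s)" "last Q = cv (r + t)" and st: "s < t" "t < n"
    and off: "set Q \<inter> set C \<subseteq> {hd Q, last Q}"
  shows "\<bar>potential s - potential t\<bar> \<le> int (length Q - 1)"
proof -
  obtain d where d: "t = s + d" "0 < d"
    using st(1) less_imp_add_positive by blast
  then have "d \<le> length Q - 1 \<or> n - d \<le> length Q - 1 \<or> length Q = 2 \<and> (d = 2 \<or> n - d = 2)"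
    using bridge_length[of Q "r + s" d] Q off st by (simp add: add.assoc)
  moreover have "\<not> (length Q = 2 \<and> d = 2)"
  proof
    assume "length Q = 2 \<and> d = 2"
    then have "short_chord (r + s)"
      using is_path_length_2[OF Q(1)] Q(2,3) d by (simp add: short_chord_def add.assoc)
    then show False
      using no_short_chord[of s] \<open>length Q = 2 \<and> d = 2\<close> st d by simp
  qed
  ultimately have "\<bar>\<bar>int s - int k\<bar> - \<bar>int t - int k\<bar>\<bar> \<le> int (length Q - 1)"
    using st two_k_Suc_eq_n d by (intro center_distance_diff_le) auto
  then show ?thesis
    by (simp add: potential_def)
qed

lemma potential_bridge:
  assumes "is_path E Q" "hd Q = cv (r + s)" "last Q = cv (r + t)" "s < n" "t < n"
    and "set Q \<inter> set C \<subseteq> {hd Q, last Q}"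
  shows "\<bar>potential s - potential t\<bar> \<le> int (length Q - 1)"
proof -
  consider "s = t" | "s < t" | "t < s"
    by linarith
  then show ?thesis
  proof cases
    case 2
    then show ?thesis
      using assms potential_bridge_ordered by blast
  next
    case 3
    have "\<bar>potential t - potential s\<bar> \<le> int (length (rev Q) - 1)"
      using assms 3 by (intro potential_bridge_ordered) (auto simp: is_path_rev sym hd_rev last_rev)
    then show ?thesis
      by (simp add: abs_minus_commute)
  qed simp
qed

lemma potential_path:
  assumes "is_path E Q" "hd Q = cv (r + s)" "last Q = cv (r + t)" "s < n" "t < n"
  shows "\<bar>potential s - potential t\<bar> \<le> int (length Q - 1)"
  using assms
proof (induction "length Q" arbitrary: Q s t rule: less_induct)
  case less
  show ?case
  proof (cases "set Q \<inter> set C \<subseteq> {hd Q, last Q}")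
    case True
    then show ?thesis
      using less.prems potential_bridge by blast
  next
    case False
    then obtain z where z: "z \<in> set Q" "z \<in> set C" "z \<noteq> hd Q" "z \<noteq> last Q"
      by blast
    then obtain p where p: "p < length Q" "Q ! p = z"
      by (meson in_set_conv_nth)
    have "Q \<noteq> []"
      using less.prems(1) by (simp add: is_path_def)
    then have "p \<noteq> 0" "p \<noteq> length Q - 1"
      using p z by (metis hd_conv_nth, metis last_conv_nth)
    then have p_inner: "0 < p" "p < length Q - 1"
      using p(1) by linarith+
    obtain u where u: "u < n" "z = cv (r + u)"
      using z(2) set_C_eq[of r] by blast
    have "\<bar>potential s - potential u\<bar> \<le> int (length (take (Suc p) Q) - 1)"
      using less.prems p_inner u is_path_split[OF less.prems(1) p(1)] p(2)
      by (intro less.hyps) simp_all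
    moreover have "\<bar>potential u - potential t\<bar> \<le> int (length (drop p Q) - 1)"
      using less.prems p_inner u is_path_split[OF less.prems(1) p(1)] p(2)
      by (intro less.hyps) simp_all
    ultimately show ?thesis
      using p_inner by simp
  qed
qed

lemma shortest_path_by_potential:
  assumes "is_path E P" "hd P = cv (r + s)" "last P = cv (r + t)" "s < n" "t < n"
    and "int (length P - 1) = \<bar>potential s - potential t\<bar>"
  shows "shortest_path E P (cv (r + s)) (cv (r + t))"
  unfolding shortest_path_def
proof (intro conjI allI impI)
  fix Q assume Q: "is_path E Q \<and> hd Q = cv (r + s) \<and> last Q = cv (r + t)"
  then have "\<bar>potential s - potential t\<bar> \<le> int (length Q - 1)"
    using assms(4,5) by (intro potential_path) auto
  then have "length P - 1 \<le> length Q - 1"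
    using assms(6) by (metis of_nat_le_iff)
  moreover have "0 < length Q"
    using Q by (simp add: is_path_def)
  ultimately show "length P \<le> length Q"
    by linarith
qed (use assms in simp_all)

lemma shortest_path_arc: "shortest_path E (arc r k) (cv r) (cv (r + k))"
  using shortest_path_by_potential[of "arc r k" 0 k] n_pos k_less_n is_path_arc[OF k_less_n]
  by (simp add: hd_arc last_arc potential_0 potential_k)

lemma shortest_path_rev_arc: "shortest_path E (rev (arc (r + k) k)) (cv (r + 2 * k)) (cv (r + k))"
proof (rule shortest_path_by_potential)
  show "is_path E (rev (arc (r + k) k))"
    using is_path_rev[OF sym is_path_arc[OF k_less_n]] .
  show "hd (rev (arc (r + k) k)) = cv (r + 2 * k)"
    by (simp only: hd_rev last_arc mult_2 add.assoc)
qed (simp_all add: last_rev hd_arc potential_2k potential_k k_less_n two_k_less_n)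

lemma edge_with_antipodal_geodesics:
  "\<exists>i P1 P2. i < n \<and>
     shortest_path E P1 (C ! i) (C ! ((i + 1 + n div 2) mod n)) \<and>
     shortest_path E P2 (C ! ((i + 1) mod n)) (C ! ((i + 1 + n div 2) mod n)) \<and>
     set C = set P1 \<union> set P2 \<and>
     cycle_edges C = {{C ! i, C ! ((i + 1) mod n)}} \<union> path_edges P1 \<union> path_edges P2"
proof -
  define i where "i = (r + 2 * k) mod n"
  have C_i: "C ! i = cv (r + 2 * k)"
    by (simp add: i_def cv_def)
  have "C ! ((i + 1) mod n) = cv (r + 2 * k + 1)"
    unfolding i_def by (rule nth_C_eq_cv)
  also have "\<dots> = cv (r + n)"
    by (simp only: add.assoc two_k_Suc_eq_n)
  finally have C_i1: "C ! ((i + 1) mod n) = cv r"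
    by (simp only: cv_add_n)
  have "C ! ((i + 1 + k) mod n) = C ! (((r + 2 * k) mod n + (1 + k)) mod n)"
    by (simp only: i_def add.assoc)
  also have "\<dots> = cv (r + 2 * k + (1 + k))"
    by (rule nth_C_eq_cv)
  also have "\<dots> = cv (r + k + n)"
    by (rule arg_cong[where f = cv]) (use two_k_Suc_eq_n in linarith)
  finally have C_w: "C ! ((i + 1 + k) mod n) = cv (r + k)"
    by (simp only: cv_add_n)
  have "i < n"
    using n_pos by (simp add: i_def)
  then show ?thesis
    using shortest_path_rev_arc shortest_path_arc set_C_two_arcs cycle_edges_two_arcs C_i C_i1 C_w
    by (intro exI[of _ i] exI[of _ "rev (arc (r + k) k)"] exI[of _ "arc r k"]) simp
qed

end

theorem mainTheorem8:
  fixes V :: "'a set" and E :: "'a \<Rightarrow> 'a \<Rightarrow> bool" and C :: "'a list"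
  assumes graph: "simple_graph V E"
    and fin: "finite V"
    and noC5: "\<not> (\<exists>D. is_cycle E D \<and> length D = 5)"
    and cyc: "is_cycle E C"
    and odd: "odd (length C)"
    and ge7: "7 \<le> length C"
    and shortest: "\<forall>D. is_cycle E D \<and> odd (length D) \<and> 7 \<le> length D \<longrightarrow> length C \<le> length D"
  shows "\<exists>i P1 P2. i < length C \<and>
           shortest_path E P1 (C ! i) (C ! ((i + 1 + length C div 2) mod length C)) \<and>
           shortest_path E P2 (C ! ((i + 1) mod length C)) (C ! ((i + 1 + length C div 2) mod length C)) \<and>
           set C = set P1 \<union> set P2 \<and>
           cycle_edges C = {{C ! i, C ! ((i + 1) mod length C)}} \<union> path_edges P1 \<union> path_edges P2"
proof -
  have "minimal_odd_cycle_except_triangles E C"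
  proof
    show "E y x" if "E x y" for x y
      using graph that by (simp add: simple_graph_def)
    show "length D = 3" if "is_cycle E D" "odd (length D)" "length D < length C" for D
    proof -
      have "3 \<le> length D" "length D \<noteq> 5" "\<not> 7 \<le> length D"
        using that noC5 shortest by (auto simp: is_cycle_def)
      then show ?thesis
        using that(2) by presburger
    qed
  qed (use cyc odd ge7 in auto)
  then interpret minimal_odd_cycle_except_triangles E C .
  obtain r where "\<forall>q. q + 2 < length C \<longrightarrow> \<not> short_chord (r + q)"
    using exists_short_chord_free_base by blast
  then interpret short_chord_free_base E C r
    by unfold_locales blast
  show ?thesis
    by (rule edge_with_antipodal_geodesics)
qed

end
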